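(* Every POP-graph $(G,\prec)$ has an elementary decomposition: there are elementary POP-graphs $(G_1,\prec_1),\dots,(G_n,\prec_n)$ such that $(G,\prec)=(G_n,\prec_n)\circ\cdots\circ(G_1,\prec_1)$.
   Context: A progressive graph is a finite directed acyclic graph (parallel edges allowed) in which every source and every sink has degree one; degree-one vertices are boundary vertices, the others internal. It is elementary if each connected component has at most one internal vertex. An input edge is an edge whose initial vertex is a boundary vertex; an output edge one whose terminal vertex is a boundary vertex. For edges write $e\to e'$ if $e\neq e'$ and there is a directed path whose first edge is $e$ and last edge is $e'$. A planar order on $G$ is a linear order $\prec$ on $E(G)$ such that (P1) $e_1\to e_2$ implies $e_1\prec e_2$; (P2) if $e_1\prec e_2\prec e_3$ and $e_1\to e_3$ then $e_1\to e_2$ or $e_2\to e_3$. A POP-graph is a progressive graph with a planar order; it is elementary if the graph is. Equality of POP-graphs means isomorphism (bijections of vertices and edges preserving incidence, direction and order). Composition: let $(G_1,\prec_1)$, $(G_2,\prec_2)$ be POP-graphs, $G_1$ with output edges $o_1\prec_1\cdots\prec_1 o_n$ and $G_2$ with input edges $i_1\prec_2\cdots\prec_2 i_n$. $G_2\circ G_1$ is obtained from $G_1\sqcup G_2$ by deleting the sinks of $G_1$, the sources of $G_2$ and the edges $o_k,i_k$, and adding for each $k$ a new edge $\overline{e_k}$ from the initial vertex of $o_k$ to the terminal vertex of $i_k$. With $Q_1=\{e\in E(G_1): e\prec_1 o_1\}$, $Q_k=\{e: o_{k-1}\prec_1 e\prec_1 o_k\}$, $P_k=\{e\in E(G_2):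 i_k\prec_2 e\prec_2 i_{k+1}\}$ ($k<n$), $P_n=\{e: i_n\prec_2 e\}$, the order $\prec_2\circ\prec_1$ lists $Q_1,\{\overline{e_1}\},P_1,\dots,Q_n,\{\overline{e_n}\},P_n$ consecutively, each $Q_k$ ordered by $\prec_1$, each $P_k$ by $\prec_2$; $(G_2,\prec_2)\circ(G_1,\prec_1):=(G_2\circ G_1,\prec_2\circ\prec_1)$. *)

theory Defs
  imports Main
begin

record ('v, 'e) pgraph =
  verts :: "'v set"
  edges :: "'e set"
  src   :: "'e \<Rightarrow> 'v"
  tgt   :: "'e \<Rightarrow> 'v"
  ord   :: "('e \<times> 'e) set"

definition indeg :: "('v, 'e, 'x) pgraph_scheme \<Rightarrow> 'v \<Rightarrow> nat" where
  "indeg G v = card {e \<in> edges G. tgt G e = v}"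

definition outdeg :: "('v, 'e, 'x) pgraph_scheme \<Rightarrow> 'v \<Rightarrow> nat" where
  "outdeg G v = card {e \<in> edges G. src G e = v}"

definition deg :: "('v, 'e, 'x) pgraph_scheme \<Rightarrow> 'v \<Rightarrow> nat" where
  "deg G v = indeg G v + outdeg G v"

definition is_source :: "('v, 'e, 'x) pgraph_scheme \<Rightarrow> 'v \<Rightarrow> bool" where
  "is_source G v \<longleftrightarrow> v \<in> verts G \<and> indeg G v = 0"

definition is_sink :: "('v, 'e, 'x) pgraph_scheme \<Rightarrow> 'v \<Rightarrow> bool" where
  "is_sink G v \<longleftrightarrow> v \<in> verts G \<and> outdeg G v = 0"

definition boundary :: "('v, 'e, 'x) pgraph_scheme \<Rightarrow> 'v \<Rightarrow> bool" where
  "boundary G v \<longleftrightarrow> v \<in> verts G \<and> deg G v = 1"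

definition internal :: "('v, 'e, 'x) pgraph_scheme \<Rightarrow> 'v \<Rightarrow> bool" where
  "internal G v \<longleftrightarrow> v \<in> verts G \<and> deg G v \<noteq> 1"

definition progressive :: "('v, 'e, 'x) pgraph_scheme \<Rightarrow> bool" where
  "progressive G \<longleftrightarrow>
     finite (verts G) \<and> finite (edges G) \<and>
     (\<forall>e \<in> edges G. src G e \<in> verts G \<and> tgt G e \<in> verts G) \<and>
     acyclic {(src G e, tgt G e) | e. e \<in> edges G} \<and>
     (\<forall>v. is_source G v \<longrightarrow> deg G v = 1) \<and>
     (\<forall>v. is_sink G v \<longrightarrow> deg G v = 1)"

definition input_edges :: "('v, 'e, 'x) pgraph_scheme \<Rightarrow> 'e set" where
  "input_edges G = {e \<in> edges G. boundary G (src G e)}"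

definition output_edges :: "('v, 'e, 'x) pgraph_scheme \<Rightarrow> 'e set" where
  "output_edges G = {e \<in> edges G. boundary G (tgt G e)}"

definition edge_step :: "('v, 'e, 'x) pgraph_scheme \<Rightarrow> ('e \<times> 'e) set" where
  "edge_step G = {(e, f). e \<in> edges G \<and> f \<in> edges G \<and> tgt G e = src G f}"

definition arrow :: "('v, 'e, 'x) pgraph_scheme \<Rightarrow> 'e \<Rightarrow> 'e \<Rightarrow> bool" where
  "arrow G e e' \<longleftrightarrow> e \<noteq> e' \<and> (e, e') \<in> (edge_step G)\<^sup>+"

text \<open>Planar order: a (strict) linear order on the edges satisfying (P1) and (P2).\<close>
definition planar_order :: "('v, 'e, 'x) pgraph_scheme \<Rightarrow> bool" where
  "planar_order G \<longleftrightarrow>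
     ord G \<subseteq> edges G \<times> edges G \<and>
     irrefl (ord G) \<and> trans (ord G) \<and> total_on (edges G) (ord G) \<and>
     (\<forall>e1 e2. arrow G e1 e2 \<longrightarrow> (e1, e2) \<in> ord G) \<and>
     (\<forall>e1 e2 e3. (e1, e2) \<in> ord G \<longrightarrow> (e2, e3) \<in> ord G \<longrightarrow> arrow G e1 e3 \<longrightarrow>
        arrow G e1 e2 \<or> arrow G e2 e3)"

definition pop_graph :: "('v, 'e, 'x) pgraph_scheme \<Rightarrow> bool" where
  "pop_graph G \<longleftrightarrow> progressive G \<and> planar_order G"

text \<open>Each connected component (of the underlying undirected graph) has at most
  one internal vertex.\<close>
definition elementary :: "('v, 'e, 'x) pgraph_scheme \<Rightarrow> bool" where
  "elementary G \<longleftrightarrow>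
     (\<forall>u v. internal G u \<longrightarrow> internal G v \<longrightarrow>
        (u, v) \<in> ({(src G e, tgt G e) | e. e \<in> edges G}
                  \<union> {(tgt G e, src G e) | e. e \<in> edges G})\<^sup>* \<longrightarrow> u = v)"

definition elementary_pop :: "('v, 'e, 'x) pgraph_scheme \<Rightarrow> bool" where
  "elementary_pop G \<longleftrightarrow> pop_graph G \<and> elementary G"

text \<open>Isomorphism of POP-graphs (this is the notion of equality of POP-graphs).\<close>
definition pop_iso :: "('v, 'e) pgraph \<Rightarrow> ('w, 'f) pgraph \<Rightarrow> bool" where
  "pop_iso G H \<longleftrightarrow> (\<exists>f g.
     bij_betw f (verts G) (verts H) \<and> bij_betw g (edges G) (edges H) \<and>
     (\<forall>e \<in> edges G. src H (g e) = f (src G e) \<and> tgt H (g e) = f (tgt G e)) \<and>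
     (\<forall>e \<in> edges G. \<forall>e' \<in> edges G. (e, e') \<in> ord G \<longleftrightarrow> (g e, g e') \<in> ord H))"

text \<open>Number of output edges of G strictly before edge a (so the k-th output
  o_k, and every edge of Q_k, has exactly k-1 outputs before it).\<close>
definition outs_before :: "('v, 'e) pgraph \<Rightarrow> 'e \<Rightarrow> nat" where
  "outs_before G a = card {u \<in> output_edges G. (u, a) \<in> ord G}"

text \<open>Number of input edges of G strictly before edge b (every edge of P_k has
  exactly k inputs before it; the k-th input i_k has k-1).\<close>
definition ins_before :: "('v, 'e) pgraph \<Rightarrow> 'e \<Rightarrow> nat" where
  "ins_before G b = card {i \<in> input_edges G. (i, b) \<in> ord G}"

text \<open>The input edge i_k of G2 matched with the output edge o_k of G1.\<close>
definition matched_input :: "('v, 'e) pgraph \<Rightarrow> ('v, 'e) pgraph \<Rightarrow> 'e \<Rightarrow> 'e" where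
  "matched_input G1 G2 u =
     (THE i. i \<in> input_edges G2 \<and> ins_before G2 i = outs_before G1 u)"

definition composable :: "('v, 'e) pgraph \<Rightarrow> ('v, 'e) pgraph \<Rightarrow> bool" where
  "composable G1 G2 \<longleftrightarrow> pop_graph G1 \<and> pop_graph G2 \<and>
     card (output_edges G1) = card (input_edges G2)"

text \<open>Canonical representative of \<open>G2 \<circ> G1\<close>. Edges:
  the edges of G1 (Inl), where the output edge o_k is reused as the name of the
  new edge from the initial vertex of o_k to the terminal vertex of i_k, and the
  edges of G2 other than its inputs (Inr). Order: Q_1, e_1, P_1, ..., Q_n, e_n, P_n.\<close>
definition pop_comp :: "('v, 'e) pgraph \<Rightarrow> ('v, 'e) pgraph \<Rightarrow> ('v + 'v, 'e + 'e) pgraph" where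
  "pop_comp G1 G2 =
     \<lparr> verts = Inl ` {v \<in> verts G1. \<not> is_sink G1 v} \<union> Inr ` {v \<in> verts G2. \<not> is_source G2 v},
       edges = Inl ` edges G1 \<union> Inr ` (edges G2 - input_edges G2),
       src = (\<lambda>x. case x of Inl e \<Rightarrow> Inl (src G1 e) | Inr e \<Rightarrow> Inr (src G2 e)),
       tgt = (\<lambda>x. case x of
                 Inl e \<Rightarrow> (if e \<in> output_edges G1 then Inr (tgt G2 (matched_input G1 G2 e))
                           else Inl (tgt G1 e))
               | Inr e \<Rightarrow> Inr (tgt G2 e)),
       ord = {(Inl a, Inl b) | a b. (a, b) \<in> ord G1}
           \<union> {(Inr a, Inr b) | a b. a \<in> edges G2 - input_edges G2 \<and>
                                   b \<in> edges G2 - input_edges G2 \<and> (a, b) \<in> ord G2}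
           \<union> {(Inl a, Inr b) | a b. a \<in> edges G1 \<and> b \<in> edges G2 - input_edges G2 \<and>
                                   outs_before G1 a < ins_before G2 b}
           \<union> {(Inr b, Inl a) | a b. a \<in> edges G1 \<and> b \<in> edges G2 - input_edges G2 \<and>
                                   ins_before G2 b \<le> outs_before G1 a} \<rparr>"

text \<open>\<open>G = Gs!(n-1) \<circ> ... \<circ> Gs!0\<close> (up to isomorphism, i.e. equality of POP-graphs):
  Hs!k is the partial composite \<open>Gs!k \<circ> ... \<circ> Gs!0\<close>, each composition being defined.\<close>
definition is_composite_of :: "(nat, nat) pgraph list \<Rightarrow> ('v, 'e) pgraph \<Rightarrow> bool" where
  "is_composite_of Gs G \<longleftrightarrow> Gs \<noteq> [] \<and>
     (\<exists>Hs :: (nat, nat) pgraph list.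
        length Hs = length Gs \<and> Hs ! 0 = Gs ! 0 \<and>
        (\<forall>k. 0 < k \<and> k < length Gs \<longrightarrow>
           composable (Hs ! (k - 1)) (Gs ! k) \<and>
           pop_iso (pop_comp (Hs ! (k - 1)) (Gs ! k)) (Hs ! k)) \<and>
        pop_iso (last Hs) G)"

end

theory Submission
  imports Defs
begin

text \<open>Induction on the number of internal vertices. By acyclicity there is an internal vertex
  \<open>v\<close> all of whose outgoing edges end in sinks. Cutting every edge into \<open>v\<close> and every edge
  into a remaining sink writes \<open>G = star \<circ> lower\<close>: \<open>star\<close> consists of \<open>v\<close> with its incident
  edges and of parallel wires, so it is elementary, while \<open>lower\<close> is \<open>G\<close> without \<open>v\<close> and its
  outgoing edges and has one internal vertex fewer. The planar order of \<open>G\<close> is the composite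
  order because, by (P2), an edge of \<open>lower\<close> preceding an edge leaving \<open>v\<close> is separated from it
  by one of the cut edges. Since the factors must have natural-number vertices and edges, \<open>G\<close> is
  first replaced by an isomorphic copy over that type.\<close>

section \<open>Arrows and planar orders\<close>

lemma trancl_map:
  assumes "(x, y) \<in> R\<^sup>+" and "\<And>a b. (a, b) \<in> R \<Longrightarrow> (h a, h b) \<in> S"
  shows "(h x, h y) \<in> S\<^sup>+"
  using assms(1) by induction (auto intro: trancl_into_trancl assms(2))

lemma acyclic_by_vertex_map:
  assumes "acyclic {(src G e, tgt G e) | e. e \<in> edges G}"
    and "\<And>e. e \<in> edges H \<Longrightarrow> \<exists>e' \<in> edges G. h (src H e) = src G e' \<and> h (tgt H e) = tgt G e'"
  shows "acyclic {(src H e, tgt H e) | e. e \<in> edges H}"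
  unfolding acyclic_def
proof (intro allI notI)
  fix x assume "(x, x) \<in> {(src H e, tgt H e) | e. e \<in> edges H}\<^sup>+"
  then have "(h x, h x) \<in> {(src G e, tgt G e) | e. e \<in> edges G}\<^sup>+"
    by (rule trancl_map) (use assms(2) in fastforce)
  then show False using assms(1) unfolding acyclic_def by blast
qed

lemma edge_step_trancl_edges: "(a, b) \<in> (edge_step G)\<^sup>+ \<Longrightarrow> a \<in> edges G \<and> b \<in> edges G"
  by (induction rule: trancl_induct) (auto simp: edge_step_def)

lemma arrow_edges: "arrow G a b \<Longrightarrow> a \<in> edges G \<and> b \<in> edges G"
  unfolding arrow_def by (auto dest: edge_step_trancl_edges)

lemma arrow_if_edge_step: "(a, b) \<in> edge_step G \<Longrightarrow> a \<noteq> b \<Longrightarrow> arrow G a b"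
  unfolding arrow_def by blast

lemma planar_order_pullback:
  assumes planar: "planar_order G"
    and inj: "inj_on h (edges H)" and into: "h ` edges H \<subseteq> edges G"
    and ord_H: "ord H \<subseteq> edges H \<times> edges H"
    and ord_iff: "\<And>a b. a \<in> edges H \<Longrightarrow> b \<in> edges H \<Longrightarrow> (a, b) \<in> ord H \<longleftrightarrow> (h a, h b) \<in> ord G"
    and arrow_iff: "\<And>a b. a \<in> edges H \<Longrightarrow> b \<in> edges H \<Longrightarrow> arrow H a b \<longleftrightarrow> arrow G (h a) (h b)"
  shows "planar_order H"
proof -
  have irrefl_G: "(a, a) \<notin> ord G" and trans_G: "(a, b) \<in> ord G \<Longrightarrow> (b, c) \<in> ord G \<Longrightarrow> (a, c) \<in> ord G"
    and total_G: "a \<in> edges G \<Longrightarrow> b \<in> edges G \<Longrightarrow> a \<noteq> b \<Longrightarrow> (a, b) \<in> ord G \<or> (b, a) \<in> ord G"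
    and P1: "arrow G a b \<Longrightarrow> (a, b) \<in> ord G"
    and P2: "(a, b) \<in> ord G \<Longrightarrow> (b, c) \<in> ord G \<Longrightarrow> arrow G a c \<Longrightarrow> arrow G a b \<or> arrow G b c"
    for a b c
    using planar by (auto simp: planar_order_def irrefl_def total_on_def dest: transD)
  have in_H: "a \<in> edges H" "b \<in> edges H" if "(a, b) \<in> ord H" for a b
    using that ord_H by auto
  have "irrefl (ord H)"
    using irrefl_G ord_iff in_H unfolding irrefl_def by blast
  moreover have "trans (ord H)"
    using trans_G ord_iff in_H unfolding trans_def by meson
  moreover have "total_on (edges H) (ord H)"
    unfolding total_on_def
  proof (intro ballI impI)
    fix a b assume "a \<in> edges H" "b \<in> edges H" "a \<noteq> b"
    moreover then have "h a \<noteq> h b"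
      using inj by (auto dest: inj_onD)
    ultimately show "(a, b) \<in> ord H \<or> (b, a) \<in> ord H"
      using total_G[of "h a" "h b"] into ord_iff by blast
  qed
  moreover have "(a, b) \<in> ord H" if "arrow H a b" for a b
    using that P1 arrow_edges[of H a b] arrow_iff ord_iff by blast
  moreover have "arrow H a b \<or> arrow H b c"
    if "(a, b) \<in> ord H" "(b, c) \<in> ord H" "arrow H a c" for a b c
    using that P2[of "h a" "h b" "h c"] in_H arrow_iff ord_iff by meson
  ultimately show ?thesis
    using ord_H unfolding planar_order_def by blast
qed

lemma planar_order_subgraph:
  assumes "planar_order G" and "edges H \<subseteq> edges G"
    and ord_H: "ord H = ord G \<inter> (edges H \<times> edges H)"
    and "\<And>a b. a \<in> edges H \<Longrightarrow> b \<in> edges H \<Longrightarrow> arrow H a b \<longleftrightarrow> arrow G a b"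
  shows "planar_order H"
  by (rule planar_order_pullback[where h = id]) (use assms in \<open>simp_all add: ord_H\<close>)

section \<open>Isomorphisms of POP-graphs\<close>

locale pgraph_iso =
  fixes G :: "('v, 'e) pgraph" and H :: "('w, 'f) pgraph"
    and f :: "'v \<Rightarrow> 'w" and g :: "'e \<Rightarrow> 'f"
  assumes bij_verts: "bij_betw f (verts G) (verts H)"
    and bij_edges: "bij_betw g (edges G) (edges H)"
    and incident: "e \<in> edges G \<Longrightarrow> src G e \<in> verts G \<and> tgt G e \<in> verts G"
    and src_map: "e \<in> edges G \<Longrightarrow> src H (g e) = f (src G e)"
    and tgt_map: "e \<in> edges G \<Longrightarrow> tgt H (g e) = f (tgt G e)"
    and ord_map: "e \<in> edges G \<Longrightarrow> e' \<in> edges G \<Longrightarrow> (g e, g e') \<in> ord H \<longleftrightarrow> (e, e') \<in> ord G"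
begin

lemma pop_iso: "pop_iso G H"
  unfolding pop_iso_def
  by (intro exI[of _ f] exI[of _ g] conjI bij_verts bij_edges ballI)
     (simp_all add: src_map tgt_map ord_map)

lemma inverse: "pgraph_iso H G (inv_into (verts G) f) (inv_into (edges G) g)"
proof -
  let ?f' = "inv_into (verts G) f" and ?g' = "inv_into (edges G) g"
  have inj: "inj_on f (verts G)"
    using bij_verts by (simp add: bij_betw_def)
  have bij': "bij_betw ?f' (verts H) (verts G)" "bij_betw ?g' (edges H) (edges G)"
    using bij_verts bij_edges by (simp_all add: bij_betw_inv_into)
  have edge: "?g' e \<in> edges G" "g (?g' e) = e" if "e \<in> edges H" for e
    using that bij_edges bij'(2) by (simp_all add: bij_betw_apply bij_betw_inv_into_right)
  have src_eq: "src H e = f (src G (?g' e))" and tgt_eq: "tgt H e = f (tgt G (?g' e))"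
    if "e \<in> edges H" for e
    using src_map[OF edge(1)[OF that]] tgt_map[OF edge(1)[OF that]] by (simp_all add: edge(2)[OF that])
  show ?thesis
  proof
    fix e assume e: "e \<in> edges H"
    have ends: "src G (?g' e) \<in> verts G" "tgt G (?g' e) \<in> verts G"
      using incident[OF edge(1)[OF e]] by simp_all
    show "src H e \<in> verts H \<and> tgt H e \<in> verts H"
      unfolding src_eq[OF e] tgt_eq[OF e] using ends bij_verts by (simp add: bij_betw_apply)
    show "src G (?g' e) = ?f' (src H e)"
      unfolding src_eq[OF e] using ends inj by (simp add: inv_into_f_f)
    show "tgt G (?g' e) = ?f' (tgt H e)"
      unfolding tgt_eq[OF e] using ends inj by (simp add: inv_into_f_f)
    fix e' assume e': "e' \<in> edges H"
    show "(?g' e, ?g' e') \<in> ord G \<longleftrightarrow> (e, e') \<in> ord H"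
      using ord_map[OF edge(1)[OF e] edge(1)[OF e']] edge(2)[OF e] edge(2)[OF e'] by simp
  qed (fact bij')+
qed

lemma edge_step_map: "(a, b) \<in> edge_step G \<Longrightarrow> (g a, g b) \<in> edge_step H"
  using bij_edges src_map tgt_map by (auto simp: edge_step_def bij_betw_apply)

lemma arrow_map: "arrow G a b \<Longrightarrow> arrow H (g a) (g b)"
  using arrow_edges[of G a b] bij_edges trancl_map[of a b "edge_step G" g, OF _ edge_step_map]
  by (auto simp: arrow_def bij_betw_def dest: inj_onD)

lemma in_edges_map: "v \<in> verts G \<Longrightarrow> {e \<in> edges H. tgt H e = f v} = g ` {e \<in> edges G. tgt G e = v}"
  using bij_edges bij_verts incident tgt_map
  by (auto simp: bij_betw_def inj_on_def image_iff) (metis imageE)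

lemma out_edges_map: "v \<in> verts G \<Longrightarrow> {e \<in> edges H. src H e = f v} = g ` {e \<in> edges G. src G e = v}"
  using bij_edges bij_verts incident src_map
  by (auto simp: bij_betw_def inj_on_def image_iff) (metis imageE)

lemma deg_map:
  assumes "v \<in> verts G"
  shows "indeg H (f v) = indeg G v" and "outdeg H (f v) = outdeg G v" and "deg H (f v) = deg G v"
proof -
  have inj: "inj_on g A" if "A \<subseteq> edges G" for A
    using bij_edges that by (auto simp: bij_betw_def intro: inj_on_subset)
  show in_eq: "indeg H (f v) = indeg G v"
    unfolding indeg_def in_edges_map[OF assms] by (rule card_image) (rule inj; blast)
  show out_eq: "outdeg H (f v) = outdeg G v"
    unfolding outdeg_def out_edges_map[OF assms] by (rule card_image) (rule inj; blast)
  show "deg H (f v) = deg G v"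
    by (simp add: deg_def in_eq out_eq)
qed

lemma progressive_map:
  assumes "progressive G"
  shows "progressive H"
proof -
  interpret inv: pgraph_iso H G "inv_into (verts G) f" "inv_into (edges G) g"
    by (rule inverse)
  have surj: "y \<in> verts H \<Longrightarrow> \<exists>x \<in> verts G. y = f x" for y
    using bij_verts by (auto simp: bij_betw_def)
  have "acyclic {(src H e, tgt H e) | e. e \<in> edges H}"
  proof (rule acyclic_by_vertex_map[where G = G and h = "inv_into (verts G) f"])
    show "acyclic {(src G e, tgt G e) | e. e \<in> edges G}"
      using assms by (simp add: progressive_def)
    fix e assume "e \<in> edges H"
    then show "\<exists>e' \<in> edges G. inv_into (verts G) f (src H e) = src G e' \<and>
                                inv_into (verts G) f (tgt H e) = tgt G e'"
      by (intro bexI[of _ "inv_into (edges G) g e"])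
         (simp_all add: inv.src_map inv.tgt_map bij_betw_apply[OF inv.bij_edges])
  qed
  moreover have "finite (verts H)" "finite (edges H)"
    using assms bij_verts bij_edges by (auto simp: progressive_def bij_betw_finite)
  moreover have "deg H y = 1" if "is_source H y \<or> is_sink H y" for y
    using that surj[of y] assms deg_map by (fastforce simp: progressive_def is_source_def is_sink_def)
  ultimately show ?thesis
    using inv.incident by (auto simp: progressive_def)
qed

lemma planar_order_map:
  assumes "planar_order G" and "ord H \<subseteq> edges H \<times> edges H"
  shows "planar_order H"
proof -
  interpret inv: pgraph_iso H G "inv_into (verts G) f" "inv_into (edges G) g"
    by (rule inverse)
  have g_inv: "g (inv_into (edges G) g e) = e" if "e \<in> edges H" for e
    using bij_edges that by (simp add: bij_betw_inv_into_right)
  show ?thesis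
  proof (rule planar_order_pullback[where h = "inv_into (edges G) g"])
    show "inj_on (inv_into (edges G) g) (edges H)" "inv_into (edges G) g ` edges H \<subseteq> edges G"
      using inv.bij_edges by (auto simp: bij_betw_def)
    fix a b assume "a \<in> edges H" "b \<in> edges H"
    then show "(a, b) \<in> ord H \<longleftrightarrow> (inv_into (edges G) g a, inv_into (edges G) g b) \<in> ord G"
      and "arrow H a b \<longleftrightarrow> arrow G (inv_into (edges G) g a) (inv_into (edges G) g b)"
      using inv.ord_map inv.arrow_map arrow_map g_inv by metis+
  qed (fact assms)+
qed

lemma pop_graph_map:
  assumes "pop_graph G" and "ord H \<subseteq> edges H \<times> edges H"
  shows "pop_graph H"
  using assms progressive_map planar_order_map by (simp add: pop_graph_def)

end

lemma pop_graph_nat_copy: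
  fixes G :: "('v, 'e) pgraph"
  assumes pop: "pop_graph G"
  obtains H :: "(nat, nat) pgraph" where "pop_graph H" and "pop_iso H G"
proof -
  have prog: "progressive G" and ord_G: "ord G \<subseteq> edges G \<times> edges G"
    using pop by (simp_all add: pop_graph_def planar_order_def)
  obtain \<phi> :: "'v \<Rightarrow> nat" where \<phi>: "inj_on \<phi> (verts G)"
    using prog finite_imp_inj_to_nat_seg by (metis progressive_def)
  obtain \<psi> :: "'e \<Rightarrow> nat" where \<psi>: "inj_on \<psi> (edges G)"
    using prog finite_imp_inj_to_nat_seg by (metis progressive_def)
  define H :: "(nat, nat) pgraph" where
    "H = \<lparr>verts = \<phi> ` verts G, edges = \<psi> ` edges G,
          src = \<lambda>e. \<phi> (src G (inv_into (edges G) \<psi> e)),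
          tgt = \<lambda>e. \<phi> (tgt G (inv_into (edges G) \<psi> e)),
          ord = map_prod \<psi> \<psi> ` ord G\<rparr>"
  interpret pgraph_iso G H \<phi> \<psi>
  proof
    show "bij_betw \<phi> (verts G) (verts H)" "bij_betw \<psi> (edges G) (edges H)"
      using \<phi> \<psi> by (simp_all add: H_def inj_on_imp_bij_betw)
    fix e assume e: "e \<in> edges G"
    then show "src G e \<in> verts G \<and> tgt G e \<in> verts G"
      using prog by (simp add: progressive_def)
    show "src H (\<psi> e) = \<phi> (src G e)" "tgt H (\<psi> e) = \<phi> (tgt G e)"
      using e \<psi> by (simp_all add: H_def)
    fix e' assume e': "e' \<in> edges G"
    have "(\<psi> e, \<psi> e') \<in> map_prod \<psi> \<psi> ` ord G \<Longrightarrow> (e, e') \<in> ord G"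
      using e e' ord_G \<psi> by (auto dest: inj_onD)
    then show "(\<psi> e, \<psi> e') \<in> ord H \<longleftrightarrow> (e, e') \<in> ord G"
      unfolding H_def by force
  qed
  have "pop_graph H"
    using pop ord_G by (intro pop_graph_map) (auto simp: H_def)
  moreover have "pop_iso H G"
    using inverse by (rule pgraph_iso.pop_iso)
  ultimately show thesis
    by (rule that)
qed

section \<open>Splitting off a top internal vertex\<close>

lemma pop_comp_simps:
  "verts (pop_comp G1 G2) = Inl ` {v \<in> verts G1. \<not> is_sink G1 v} \<union> Inr ` {v \<in> verts G2. \<not> is_source G2 v}"
  "edges (pop_comp G1 G2) = Inl ` edges G1 \<union> Inr ` (edges G2 - input_edges G2)"
  "src (pop_comp G1 G2) (Inl e) = Inl (src G1 e)"
  "src (pop_comp G1 G2) (Inr e) = Inr (src G2 e)"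
  "tgt (pop_comp G1 G2) (Inl e) =
     (if e \<in> output_edges G1 then Inr (tgt G2 (matched_input G1 G2 e)) else Inl (tgt G1 e))"
  "tgt (pop_comp G1 G2) (Inr e) = Inr (tgt G2 e)"
  by (simp_all add: pop_comp_def)

lemma pop_comp_ord:
  "(Inl a, Inl b) \<in> ord (pop_comp G1 G2) \<longleftrightarrow> (a, b) \<in> ord G1"
  "(Inr a, Inr b) \<in> ord (pop_comp G1 G2) \<longleftrightarrow>
     a \<in> edges G2 - input_edges G2 \<and> b \<in> edges G2 - input_edges G2 \<and> (a, b) \<in> ord G2"
  "(Inl a, Inr b) \<in> ord (pop_comp G1 G2) \<longleftrightarrow>
     a \<in> edges G1 \<and> b \<in> edges G2 - input_edges G2 \<and> outs_before G1 a < ins_before G2 b"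
  "(Inr b, Inl a) \<in> ord (pop_comp G1 G2) \<longleftrightarrow>
     a \<in> edges G1 \<and> b \<in> edges G2 - input_edges G2 \<and> ins_before G2 b \<le> outs_before G1 a"
  by (auto simp: pop_comp_def)

lemma double_neq_odd [simp]:
  fixes a b :: nat
  shows "2 * a \<noteq> 2 * b + 1" and "2 * a + 1 \<noteq> 2 * b"
    and "Suc (2 * a) \<noteq> 2 * b" and "2 * a \<noteq> Suc (2 * b)"
  by presburger+

locale top_vertex =
  fixes G :: "(nat, nat) pgraph" and v :: nat
  assumes pop: "pop_graph G" and internal_v: "internal G v"
    and out_v_to_sink: "\<And>e. e \<in> edges G \<Longrightarrow> src G e = v \<Longrightarrow> is_sink G (tgt G e)"
begin

definition in_v :: "nat set" where
  "in_v = {e \<in> edges G. tgt G e = v}"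
definition out_v :: "nat set" where
  "out_v = {e \<in> edges G. src G e = v}"
definition wires :: "nat set" where
  "wires = {e \<in> edges G. is_sink G (tgt G e) \<and> src G e \<noteq> v}"
definition cut_edges :: "nat set" where
  "cut_edges = in_v \<union> wires"
definition lower_edges :: "nat set" where
  "lower_edges = edges G - out_v"
definition lower_verts :: "nat set" where
  "lower_verts = {x \<in> verts G. x \<noteq> v \<and> x \<notin> tgt G ` out_v}"
definition star_edges :: "nat set" where
  "star_edges = cut_edges \<union> out_v"

text \<open>Vertex \<open>x\<close> of \<open>G\<close> is renamed \<open>2 x\<close>; the odd vertex \<open>2 e + 1\<close> is the new
  boundary vertex at which the edge \<open>e \<in> cut_edges\<close> is severed.\<close>

definition lower :: "(nat, nat) pgraph" where
  "lower = \<lparr>verts = (\<lambda>x. 2 * x) ` lower_verts \<union> (\<lambda>e. 2 * e + 1) ` in_v,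
            edges = lower_edges,
            src = (\<lambda>e. 2 * src G e),
            tgt = (\<lambda>e. if tgt G e = v then 2 * e + 1 else 2 * tgt G e),
            ord = ord G \<inter> (lower_edges \<times> lower_edges)\<rparr>"

definition star :: "(nat, nat) pgraph" where
  "star = \<lparr>verts = {2 * v} \<union> (\<lambda>e. 2 * e + 1) ` cut_edges \<union> (\<lambda>t. 2 * t) ` {t \<in> verts G. is_sink G t},
           edges = star_edges,
           src = (\<lambda>e. if src G e = v then 2 * v else 2 * e + 1),
           tgt = (\<lambda>e. 2 * tgt G e),
           ord = ord G \<inter> (star_edges \<times> star_edges)\<rparr>"

lemma progressive: "progressive G"
  and planar: "planar_order G"
  using pop by (simp_all add: pop_graph_def)

lemma finite_edges: "finite (edges G)"
  and finite_verts: "finite (verts G)"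
  and src_in_verts: "e \<in> edges G \<Longrightarrow> src G e \<in> verts G"
  and tgt_in_verts: "e \<in> edges G \<Longrightarrow> tgt G e \<in> verts G"
  and acyclic_G: "acyclic {(src G e, tgt G e) | e. e \<in> edges G}"
  and sink_deg: "is_sink G t \<Longrightarrow> deg G t = 1"
  and source_deg: "is_source G t \<Longrightarrow> deg G t = 1"
  using progressive by (simp_all add: progressive_def)

lemma ord_irrefl: "(a, a) \<notin> ord G"
  and ord_trans: "(a, b) \<in> ord G \<Longrightarrow> (b, c) \<in> ord G \<Longrightarrow> (a, c) \<in> ord G"
  and ord_total: "a \<in> edges G \<Longrightarrow> b \<in> edges G \<Longrightarrow> a \<noteq> b \<Longrightarrow> (a, b) \<in> ord G \<or> (b, a) \<in> ord G"
  and arrow_ord: "arrow G a b \<Longrightarrow> (a, b) \<in> ord G"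
  and ord_arrow_between: "(a, b) \<in> ord G \<Longrightarrow> (b, c) \<in> ord G \<Longrightarrow> arrow G a c \<Longrightarrow> arrow G a b \<or> arrow G b c"
  using planar by (auto simp: planar_order_def irrefl_def total_on_def dest: transD)

lemma v_in_verts: "v \<in> verts G"
  and deg_v: "deg G v \<noteq> 1"
  using internal_v by (simp_all add: internal_def)

lemma src_neq_tgt: "e \<in> edges G \<Longrightarrow> src G e \<noteq> tgt G e"
  using acyclic_G unfolding acyclic_def by (metis (mono_tags, lifting) mem_Collect_eq r_into_trancl')

lemma sink_not_src: "is_sink G t \<Longrightarrow> e \<in> edges G \<Longrightarrow> src G e \<noteq> t"
  using finite_edges by (auto simp: is_sink_def outdeg_def)

lemma sink_in_edge_unique:
  assumes "is_sink G t" "e \<in> edges G" "e' \<in> edges G" "tgt G e = t" "tgt G e' = t"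
  shows "e = e'"
proof -
  have "card {e \<in> edges G. tgt G e = t} = 1"
    using sink_deg assms(1) by (simp add: indeg_def deg_def is_sink_def)
  then obtain x where x: "{e \<in> edges G. tgt G e = t} = {x}"
    by (rule card_1_singletonE)
  have "e \<in> {e \<in> edges G. tgt G e = t}" "e' \<in> {e \<in> edges G. tgt G e = t}"
    using assms by simp_all
  then show ?thesis
    unfolding x by simp
qed

lemma indeg_tgt_nonzero: "e \<in> edges G \<Longrightarrow> indeg G (tgt G e) \<noteq> 0"
  using finite_edges unfolding indeg_def by auto

lemma v_not_sink: "\<not> is_sink G v"
  and v_not_source: "\<not> is_source G v"
  using sink_deg source_deg deg_v by auto

lemma in_v_nonempty: "in_v \<noteq> {}"
  using v_not_source v_in_verts unfolding is_source_def indeg_def in_v_def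
  by (metis (no_types, lifting) card.empty empty_Collect_eq)

lemma out_v_sink: "e \<in> out_v \<Longrightarrow> is_sink G (tgt G e)"
  using out_v_to_sink by (auto simp: out_v_def)

lemma out_v_no_successor: "e \<in> out_v \<Longrightarrow> (e, e') \<notin> edge_step G"
  using out_v_sink sink_not_src by (fastforce simp: edge_step_def)

lemma wires_no_successor: "e \<in> wires \<Longrightarrow> (e, e') \<notin> edge_step G"
  using sink_not_src by (fastforce simp: edge_step_def wires_def)

lemma in_v_not_out_v: "e \<in> in_v \<Longrightarrow> e \<notin> out_v"
  unfolding in_v_def out_v_def using src_neq_tgt[of e] by auto

lemma in_v_out_v_arrow: "e \<in> in_v \<Longrightarrow> e' \<in> out_v \<Longrightarrow> arrow G e e'"
  using in_v_not_out_v by (intro arrow_if_edge_step) (auto simp: edge_step_def in_v_def out_v_def)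

lemma cut_edges_subset: "cut_edges \<subseteq> edges G"
  by (auto simp: cut_edges_def in_v_def wires_def)

lemma cut_edges_src: "e \<in> cut_edges \<Longrightarrow> src G e \<noteq> v"
  unfolding cut_edges_def in_v_def wires_def using src_neq_tgt[of e] by auto

lemma cut_edges_not_out_v: "e \<in> cut_edges \<Longrightarrow> e \<notin> out_v"
  using cut_edges_src by (auto simp: out_v_def)

lemma cut_edges_subset_lower_edges: "cut_edges \<subseteq> lower_edges"
  using cut_edges_subset cut_edges_not_out_v by (auto simp: lower_edges_def)

lemma in_v_subset_cut_edges: "in_v \<subseteq> cut_edges"
  by (auto simp: cut_edges_def)

lemma finite_cut_edges: "finite cut_edges"
  using cut_edges_subset finite_edges finite_subset by blast

lemma trancl_from_in_v: "(e, e') \<in> (edge_step G)\<^sup>+ \<Longrightarrow> e \<in> in_v \<Longrightarrow> e' \<in> out_v"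
proof (induction rule: trancl_induct)
  case (base y)
  then show ?case by (auto simp: edge_step_def in_v_def out_v_def)
next
  case (step y z)
  then show ?case using out_v_no_successor by auto
qed

lemma lower_simps:
  "verts lower = (\<lambda>x. 2 * x) ` lower_verts \<union> (\<lambda>e. 2 * e + 1) ` in_v"
  "edges lower = lower_edges"
  "src lower = (\<lambda>e. 2 * src G e)"
  "tgt lower = (\<lambda>e. if tgt G e = v then 2 * e + 1 else 2 * tgt G e)"
  "ord lower = ord G \<inter> (lower_edges \<times> lower_edges)"
  by (simp_all add: lower_def)

lemma tgt_in_lower_verts:
  assumes e: "e \<in> lower_edges" and "tgt G e \<noteq> v"
  shows "tgt G e \<in> lower_verts"
proof -
  have "tgt G e \<notin> tgt G ` out_v"
  proof
    assume "tgt G e \<in> tgt G ` out_v"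
    then obtain e' where e': "e' \<in> out_v" "tgt G e' = tgt G e"
      by auto
    have "is_sink G (tgt G e')"
      using e'(1) by (rule out_v_sink)
    then have "e' = e"
      by (rule sink_in_edge_unique) (use e e' in \<open>auto simp: out_v_def lower_edges_def\<close>)
    then show False
      using e e' by (simp add: lower_edges_def)
  qed
  then show ?thesis
    using assms tgt_in_verts by (auto simp: lower_verts_def lower_edges_def)
qed

lemma src_in_lower_verts:
  assumes e: "e \<in> lower_edges"
  shows "src G e \<in> lower_verts"
proof -
  have "src G e \<notin> tgt G ` out_v"
    using out_v_sink sink_not_src e by (fastforce simp: lower_edges_def)
  then show ?thesis
    using e src_in_verts by (auto simp: lower_verts_def lower_edges_def out_v_def)
qed

lemma lower_degs_double:
  assumes x: "x \<in> lower_verts"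
  shows "indeg lower (2 * x) = indeg G x" and "outdeg lower (2 * x) = outdeg G x"
    and "deg lower (2 * x) = deg G x"
proof -
  have "{e \<in> edges lower. tgt lower e = 2 * x} = {e \<in> edges G. tgt G e = x}"
    and "{e \<in> edges lower. src lower e = 2 * x} = {e \<in> edges G. src G e = x}"
    using x by (auto simp: lower_simps lower_verts_def lower_edges_def out_v_def)
  then show "indeg lower (2 * x) = indeg G x" and "outdeg lower (2 * x) = outdeg G x"
    by (simp_all add: indeg_def outdeg_def)
  then show "deg lower (2 * x) = deg G x"
    by (simp add: deg_def)
qed

lemma lower_degs_odd:
  assumes e: "e \<in> in_v"
  shows "indeg lower (2 * e + 1) = 1" and "outdeg lower (2 * e + 1) = 0"
    and "deg lower (2 * e + 1) = 1"
proof -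
  have "{e' \<in> edges lower. tgt lower e' = 2 * e + 1} = {e}"
    using e in_v_not_out_v by (auto simp: lower_simps in_v_def lower_edges_def)
  then show "indeg lower (2 * e + 1) = 1" "outdeg lower (2 * e + 1) = 0"
    by (simp_all add: indeg_def outdeg_def lower_simps)
  then show "deg lower (2 * e + 1) = 1"
    by (simp add: deg_def)
qed

lemma lower_vertsE:
  assumes "y \<in> verts lower"
  obtains (double) x where "x \<in> lower_verts" "y = 2 * x"
    | (odd) e where "e \<in> in_v" "y = 2 * e + 1"
  using assms by (auto simp: lower_simps)

lemma lower_progressive: "progressive lower"
proof -
  have "finite (verts lower)" "finite (edges lower)"
    using finite_edges finite_verts by (auto simp: lower_simps lower_verts_def in_v_def lower_edges_def)
  moreover have "src lower e \<in> verts lower \<and> tgt lower e \<in> verts lower" if "e \<in> edges lower" for e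
    using that tgt_in_lower_verts src_in_lower_verts by (auto simp: lower_simps in_v_def lower_edges_def)
  moreover have "acyclic {(src lower e, tgt lower e) | e. e \<in> edges lower}"
  proof (rule acyclic_by_vertex_map[where G = G and h = "\<lambda>y. if even y then y div 2 else v"])
    fix e assume "e \<in> edges lower"
    then show "\<exists>e' \<in> edges G. (if even (src lower e) then src lower e div 2 else v) = src G e' \<and>
                              (if even (tgt lower e) then tgt lower e div 2 else v) = tgt G e'"
      by (intro bexI[of _ e]) (auto simp: lower_simps lower_edges_def)
  qed (fact acyclic_G)
  moreover have "deg lower y = 1" if "is_source lower y \<or> is_sink lower y" for y
  proof -
    have y: "y \<in> verts lower"
      using that by (auto simp: is_source_def is_sink_def)
    then show ?thesis
    proof (cases rule: lower_vertsE)
      case (double x)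
      then have "is_source G x \<or> is_sink G x"
        using that lower_degs_double lower_verts_def by (auto simp: is_source_def is_sink_def)
      then show ?thesis
        using double lower_degs_double source_deg sink_deg by auto
    next
      case (odd e)
      then show ?thesis
        using lower_degs_odd by simp
    qed
  qed
  ultimately show ?thesis
    by (simp add: progressive_def)
qed

lemma lower_edge_step: "edge_step lower = edge_step G \<inter> (lower_edges \<times> lower_edges)"
  by (auto simp: edge_step_def lower_simps lower_edges_def in_v_def out_v_def split: if_splits)

text \<open>Only edges of \<open>out_v\<close> were removed, and they have no successor, so no path of \<open>G\<close>
  between edges of \<open>lower\<close> passes through them.\<close>

lemma lower_trancl:
  "(a, b) \<in> (edge_step G)\<^sup>+ \<Longrightarrow> b \<notin> out_v \<Longrightarrow> (a, b) \<in> (edge_step lower)\<^sup>+"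
proof (induction rule: trancl_induct)
  case (base b)
  then have "(a, b) \<in> edge_step G \<inter> (lower_edges \<times> lower_edges)"
    using out_v_no_successor by (auto simp: lower_edges_def edge_step_def)
  then show ?case
    unfolding lower_edge_step[symmetric] ..
next
  case (step b c)
  then have "b \<notin> out_v"
    using out_v_no_successor by blast
  with step have "(b, c) \<in> edge_step G \<inter> (lower_edges \<times> lower_edges)"
    by (auto simp: lower_edges_def edge_step_def)
  then show ?case
    using step \<open>b \<notin> out_v\<close> unfolding lower_edge_step[symmetric] by (meson trancl_into_trancl)
qed

lemma lower_arrow_iff:
  assumes "b \<in> lower_edges"
  shows "arrow lower a b \<longleftrightarrow> arrow G a b"
proof -
  have "(edge_step lower)\<^sup>+ \<subseteq> (edge_step G)\<^sup>+"
    unfolding lower_edge_step by (rule trancl_mono_subset) simp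
  then show ?thesis
    using lower_trancl assms by (auto simp: arrow_def lower_edges_def)
qed

lemma lower_pop_graph: "pop_graph lower"
proof -
  have "planar_order lower"
  proof (rule planar_order_subgraph[OF planar])
    show "arrow lower a b \<longleftrightarrow> arrow G a b" if "a \<in> edges lower" "b \<in> edges lower" for a b
      using that(2) lower_arrow_iff by (simp add: lower_simps)
  qed (auto simp: lower_simps lower_edges_def)
  then show ?thesis
    using lower_progressive by (simp add: pop_graph_def)
qed

lemma lower_internal: "{y. internal lower y} = (\<lambda>x. 2 * x) ` ({x. internal G x} - {v})"
proof (intro equalityI subsetI)
  fix y assume "y \<in> {y. internal lower y}"
  then have y: "y \<in> verts lower" "deg lower y \<noteq> 1"
    by (simp_all add: internal_def)
  then show "y \<in> (\<lambda>x. 2 * x) ` ({x. internal G x} - {v})"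
  proof (cases rule: lower_vertsE)
    case (double x)
    then show ?thesis
      using y(2) by (auto simp: internal_def lower_verts_def lower_degs_double)
  next
    case (odd e)
    then show ?thesis
      using y(2) lower_degs_odd by simp
  qed
next
  fix y assume "y \<in> (\<lambda>x. 2 * x) ` ({x. internal G x} - {v})"
  then obtain x where x: "y = 2 * x" "x \<in> verts G" "deg G x \<noteq> 1" "x \<noteq> v"
    by (auto simp: internal_def)
  then have "x \<in> lower_verts"
    using out_v_sink sink_deg by (auto simp: lower_verts_def)
  then show "y \<in> {y. internal lower y}"
    using x lower_degs_double by (auto simp: lower_simps internal_def)
qed

lemma card_internal_lower: "card {y. internal lower y} = card {x. internal G x} - 1"
proof -
  have "finite {x. internal G x}"
    using finite_verts by (simp add: internal_def)
  moreover have "card {y. internal lower y} = card ({x. internal G x} - {v})"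
    unfolding lower_internal by (rule card_image) (auto simp: inj_on_def)
  ultimately show ?thesis
    using internal_v by simp
qed

lemma lower_outputs: "output_edges lower = cut_edges"
proof -
  have "boundary lower (tgt lower e) \<longleftrightarrow> e \<in> cut_edges" if e: "e \<in> lower_edges" for e
  proof (cases "tgt G e = v")
    case True
    then have "e \<in> in_v"
      using e by (auto simp: in_v_def lower_edges_def)
    then show ?thesis
      using True lower_degs_odd in_v_subset_cut_edges by (auto simp: boundary_def lower_simps)
  next
    case False
    then have "tgt G e \<in> lower_verts"
      using tgt_in_lower_verts e by blast
    then have "boundary lower (tgt lower e) \<longleftrightarrow> deg G (tgt G e) = 1"
      using False lower_degs_double by (auto simp: boundary_def lower_simps)
    also have "\<dots> \<longleftrightarrow> is_sink G (tgt G e)"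
      using sink_deg indeg_tgt_nonzero[of e] tgt_in_verts[of e] e
      by (auto simp: deg_def is_sink_def lower_edges_def)
    also have "\<dots> \<longleftrightarrow> e \<in> cut_edges"
      using e False by (auto simp: cut_edges_def wires_def in_v_def lower_edges_def out_v_def)
    finally show ?thesis .
  qed
  moreover have "output_edges lower = {e \<in> lower_edges. boundary lower (tgt lower e)}"
    by (simp add: output_edges_def lower_simps(2))
  ultimately show ?thesis
    using cut_edges_subset_lower_edges by blast
qed

lemma star_simps:
  "verts star = {2 * v} \<union> (\<lambda>e. 2 * e + 1) ` cut_edges \<union> (\<lambda>t. 2 * t) ` {t \<in> verts G. is_sink G t}"
  "edges star = star_edges"
  "src star = (\<lambda>e. if src G e = v then 2 * v else 2 * e + 1)"
  "tgt star = (\<lambda>e. 2 * tgt G e)"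
  "ord star = ord G \<inter> (star_edges \<times> star_edges)"
  by (simp_all add: star_def)

lemma star_edges_subset: "star_edges \<subseteq> edges G"
  using cut_edges_subset by (auto simp: star_edges_def out_v_def)

lemma star_edgesE:
  assumes "e \<in> star_edges"
  obtains "e \<in> in_v" | "e \<in> wires" | "e \<in> out_v"
  using assms by (auto simp: star_edges_def cut_edges_def)

lemma star_edge_into_sink: "e \<in> edges G \<Longrightarrow> is_sink G (tgt G e) \<Longrightarrow> e \<in> star_edges"
  by (auto simp: star_edges_def cut_edges_def wires_def out_v_def)

lemma star_degs_v: "indeg star (2 * v) = indeg G v" "outdeg star (2 * v) = outdeg G v"
  and star_deg_v: "deg star (2 * v) \<noteq> 1"
proof -
  have "{e \<in> edges star. tgt star e = 2 * v} = {e \<in> edges G. tgt G e = v}"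
    and "{e \<in> edges star. src star e = 2 * v} = {e \<in> edges G. src G e = v}"
    using star_edges_subset by (auto simp: star_simps star_edges_def cut_edges_def in_v_def out_v_def)
  then show "indeg star (2 * v) = indeg G v" "outdeg star (2 * v) = outdeg G v"
    by (simp_all add: indeg_def outdeg_def)
  then show "deg star (2 * v) \<noteq> 1"
    using deg_v by (simp add: deg_def)
qed

lemma star_degs_odd:
  assumes e: "e \<in> cut_edges"
  shows "indeg star (2 * e + 1) = 0" and "outdeg star (2 * e + 1) = 1"
    and "deg star (2 * e + 1) = 1"
proof -
  have "{e' \<in> edges star. src star e' = 2 * e + 1} = {e}"
    using e cut_edges_src by (auto simp: star_simps star_edges_def)
  then show "indeg star (2 * e + 1) = 0" "outdeg star (2 * e + 1) = 1"
    by (simp_all add: indeg_def outdeg_def star_simps)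
  then show "deg star (2 * e + 1) = 1"
    by (simp add: deg_def)
qed

lemma star_degs_sink:
  assumes t: "is_sink G t"
  shows "indeg star (2 * t) = 1" and "outdeg star (2 * t) = 0" and "deg star (2 * t) = 1"
proof -
  have "{e \<in> edges star. tgt star e = 2 * t} = {e \<in> edges G. tgt G e = t}"
    using t star_edge_into_sink star_edges_subset by (auto simp: star_simps)
  moreover have "indeg G t = 1"
    using t sink_deg by (simp add: deg_def is_sink_def)
  ultimately show "indeg star (2 * t) = 1"
    by (simp add: indeg_def)
  have "{e \<in> edges star. src star e = 2 * t} = {}"
    using v_not_sink t by (auto simp: star_simps)
  then show "outdeg star (2 * t) = 0"
    unfolding outdeg_def by (metis card.empty)
  then show "deg star (2 * t) = 1"
    using \<open>indeg star (2 * t) = 1\<close> by (simp add: deg_def)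
qed

lemma star_vertsE:
  assumes "y \<in> verts star"
  obtains (v) "y = 2 * v"
    | (odd) e where "e \<in> cut_edges" "y = 2 * e + 1"
    | (sink) t where "t \<in> verts G" "is_sink G t" "y = 2 * t"
  using assms by (auto simp: star_simps)

lemma star_progressive: "progressive star"
proof -
  have "finite (verts star)" "finite (edges star)"
    using finite_cut_edges finite_verts finite_edges star_edges_subset
    by (auto simp: star_simps intro: finite_subset)
  moreover have "src star e \<in> verts star \<and> tgt star e \<in> verts star" if "e \<in> edges star" for e
  proof -
    have e: "e \<in> star_edges"
      using that by (simp add: star_simps)
    then have "src G e \<noteq> v \<Longrightarrow> e \<in> cut_edges"
      by (auto simp: star_edges_def out_v_def)
    moreover have "is_sink G (tgt G e) \<or> tgt G e = v"
      using e by (cases rule: star_edgesE) (auto simp: in_v_def wires_def out_v_sink)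
    ultimately show ?thesis
      using e star_edges_subset tgt_in_verts by (auto simp: star_simps)
  qed
  moreover have "acyclic {(src star e, tgt star e) | e. e \<in> edges star}"
  proof (rule acyclic_by_vertex_map[where G = G and h = "\<lambda>y. if even y then y div 2 else src G (y div 2)"])
    fix e assume "e \<in> edges star"
    then show "\<exists>e' \<in> edges G. (if even (src star e) then src star e div 2 else src G (src star e div 2)) = src G e' \<and>
                              (if even (tgt star e) then tgt star e div 2 else src G (tgt star e div 2)) = tgt G e'"
      using star_edges_subset by (intro bexI[of _ e]) (auto simp: star_simps)
  qed (fact acyclic_G)
  moreover have "deg star y = 1" if "is_source star y \<or> is_sink star y" for y
  proof -
    have "y \<in> verts star"
      using that by (auto simp: is_source_def is_sink_def)
    then show ?thesis
    proof (cases rule: star_vertsE)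
      case v
      then show ?thesis
        using that star_degs_v v_in_verts v_not_source v_not_sink by (auto simp: is_source_def is_sink_def)
    qed (use star_degs_odd star_degs_sink in simp_all)
  qed
  ultimately show ?thesis
    by (simp add: progressive_def)
qed

lemma star_edge_step: "(e, e') \<in> edge_step star \<longleftrightarrow> e \<in> in_v \<and> e' \<in> out_v"
proof
  assume "(e, e') \<in> edge_step star"
  then have "e \<in> star_edges" "e' \<in> star_edges" "2 * tgt G e = (if src G e' = v then 2 * v else 2 * e' + 1)"
    by (auto simp: edge_step_def star_simps)
  then show "e \<in> in_v \<and> e' \<in> out_v"
    using star_edges_subset by (auto simp: in_v_def out_v_def split: if_splits)
next
  assume "e \<in> in_v \<and> e' \<in> out_v"
  then show "(e, e') \<in> edge_step star"
    by (auto simp: edge_step_def star_simps star_edges_def cut_edges_def in_v_def out_v_def)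
qed

text \<open>In \<open>star\<close> and in \<open>G\<close> alike, the only arrows between edges of \<open>star\<close> are those
  from \<open>in_v\<close> to \<open>out_v\<close>: wires and edges of \<open>out_v\<close> end at sinks.\<close>

lemma star_arrow_iff: "arrow star e e' \<longleftrightarrow> e \<in> in_v \<and> e' \<in> out_v"
proof -
  have "(e, e') \<in> (edge_step star)\<^sup>+ \<Longrightarrow> e \<in> in_v \<and> e' \<in> out_v"
    by (induction rule: trancl_induct) (auto simp: star_edge_step)
  then show ?thesis
    using star_edge_step in_v_not_out_v unfolding arrow_def by blast
qed

lemma arrow_from_star_edge:
  assumes e: "e \<in> star_edges" and "arrow G e e'"
  shows "e \<in> in_v \<and> e' \<in> out_v"
proof -
  obtain e'' where step: "(e, e'') \<in> edge_step G"
    using assms(2) by (auto simp: arrow_def dest: tranclD)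
  have "e \<in> in_v"
    by (rule star_edgesE[OF e]) (use step out_v_no_successor wires_no_successor in blast)+
  then show ?thesis
    using assms(2) trancl_from_in_v by (auto simp: arrow_def)
qed

lemma star_pop_graph: "pop_graph star"
proof -
  have "planar_order star"
  proof (rule planar_order_subgraph[OF planar])
    show "arrow star a b \<longleftrightarrow> arrow G a b" if "a \<in> edges star" "b \<in> edges star" for a b
      using that arrow_from_star_edge star_arrow_iff in_v_out_v_arrow by (auto simp: star_simps)
  qed (use star_edges_subset in \<open>auto simp: star_simps\<close>)
  then show ?thesis
    using star_progressive by (simp add: pop_graph_def)
qed

lemma star_elementary: "elementary_pop star"
proof -
  have "y = 2 * v" if "y \<in> verts star" "deg star y \<noteq> 1" for y
    using that(1) by (cases rule: star_vertsE) (use that(2) star_degs_odd star_degs_sink in simp_all)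
  then show ?thesis
    using star_pop_graph by (auto simp: elementary_pop_def elementary_def internal_def)
qed

lemma star_inputs: "input_edges star = cut_edges"
proof -
  have "boundary star (src star e) \<longleftrightarrow> e \<in> cut_edges" if e: "e \<in> star_edges" for e
  proof (cases "src G e = v")
    case True
    then show ?thesis
      using cut_edges_src star_deg_v by (auto simp: boundary_def star_simps)
  next
    case False
    then have "e \<in> cut_edges"
      using e by (auto simp: star_edges_def out_v_def)
    then show ?thesis
      using False star_degs_odd by (auto simp: boundary_def star_simps)
  qed
  moreover have "input_edges star = {e \<in> star_edges. boundary star (src star e)}"
    by (simp add: input_edges_def star_simps(2))
  ultimately show ?thesis
    by (auto simp: star_edges_def)
qed

definition cuts_before :: "nat \<Rightarrow> nat" where
  "cuts_before a = card {u \<in> cut_edges. (u, a) \<in> ord G}"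

lemma lower_outs_before: "a \<in> lower_edges \<Longrightarrow> outs_before lower a = cuts_before a"
  using cut_edges_subset_lower_edges
  by (auto simp: outs_before_def cuts_before_def lower_outputs lower_simps intro!: arg_cong[where f = card])

lemma star_ins_before: "b \<in> star_edges \<Longrightarrow> ins_before star b = cuts_before b"
  by (auto simp: ins_before_def cuts_before_def star_inputs star_simps star_edges_def
           intro!: arg_cong[where f = card])

lemma cuts_before_mono: "(a, b) \<in> ord G \<Longrightarrow> cuts_before a \<le> cuts_before b"
  unfolding cuts_before_def by (rule card_mono) (use finite_cut_edges ord_trans in auto)

lemma cuts_before_less:
  assumes "u \<in> cut_edges" "u = a \<or> (a, u) \<in> ord G" "(u, b) \<in> ord G"
  shows "cuts_before a < cuts_before b"
proof -
  have "{u \<in> cut_edges. (u, a) \<in> ord G} \<subset> {u \<in> cut_edges. (u, b) \<in> ord G}"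
    using assms ord_trans ord_irrefl by blast
  then show ?thesis
    unfolding cuts_before_def by (rule psubset_card_mono[rotated]) (use finite_cut_edges in auto)
qed

text \<open>Every edge of \<open>lower\<close> below an edge of \<open>out_v\<close> is separated from it by a cut edge.
  Otherwise, taking \<open>i \<in> in_v\<close>, the order would be \<open>i \<prec> a \<prec> b\<close> with \<open>i \<rightarrow> b\<close>; by (P2)
  either \<open>i \<rightarrow> a\<close>, impossible as paths from \<open>in_v\<close> end in \<open>out_v\<close>, or \<open>a \<rightarrow> b\<close>, whose
  path enters \<open>v\<close> through a cut edge.\<close>

lemma cut_edge_between:
  assumes a: "a \<in> lower_edges" and b: "b \<in> out_v" and ab: "(a, b) \<in> ord G"
  shows "\<exists>u \<in> cut_edges. (u = a \<or> (a, u) \<in> ord G) \<and> (u, b) \<in> ord G"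
proof (cases "a \<in> cut_edges")
  case True
  then show ?thesis using ab by blast
next
  case a_not_cut: False
  obtain i where i: "i \<in> in_v"
    using in_v_nonempty by blast
  have ib: "arrow G i b"
    using i b by (rule in_v_out_v_arrow)
  show ?thesis
  proof (cases "(a, i) \<in> ord G")
    case True
    then show ?thesis
      using i ib arrow_ord in_v_subset_cut_edges by blast
  next
    case False
    then have "(i, a) \<in> ord G"
      using ord_total a i a_not_cut in_v_subset_cut_edges by (auto simp: lower_edges_def in_v_def)
    then have "arrow G i a \<or> arrow G a b"
      using ab ib by (rule ord_arrow_between)
    moreover have "\<not> arrow G i a"
      using a i trancl_from_in_v by (auto simp: arrow_def lower_edges_def)
    ultimately obtain c where c: "(a, c) \<in> (edge_step G)\<^sup>*" "(c, b) \<in> edge_step G"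
      by (auto simp: arrow_def dest: tranclD2)
    then have "c \<in> in_v"
      using b by (auto simp: edge_step_def in_v_def out_v_def)
    moreover have "(a, c) \<in> ord G"
      using c(1) \<open>c \<in> in_v\<close> a_not_cut in_v_subset_cut_edges arrow_ord
      by (metis arrow_def rtranclD subsetD)
    moreover have "(c, b) \<in> ord G"
      using \<open>c \<in> in_v\<close> b in_v_out_v_arrow arrow_ord by blast
    ultimately show ?thesis
      using in_v_subset_cut_edges by blast
  qed
qed

lemma ord_lower_out_v_iff:
  assumes a: "a \<in> lower_edges" and b: "b \<in> out_v"
  shows "(a, b) \<in> ord G \<longleftrightarrow> cuts_before a < cuts_before b"
    and "(b, a) \<in> ord G \<longleftrightarrow> cuts_before b \<le> cuts_before a"
proof -
  have "(a, b) \<in> ord G \<Longrightarrow> cuts_before a < cuts_before b"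
    using a b cut_edge_between cuts_before_less by blast
  moreover have "(b, a) \<in> ord G \<Longrightarrow> cuts_before b \<le> cuts_before a"
    by (rule cuts_before_mono)
  moreover have "(a, b) \<in> ord G \<or> (b, a) \<in> ord G"
    using a b ord_total by (auto simp: lower_edges_def out_v_def)
  ultimately show "(a, b) \<in> ord G \<longleftrightarrow> cuts_before a < cuts_before b"
    and "(b, a) \<in> ord G \<longleftrightarrow> cuts_before b \<le> cuts_before a"
    by linarith+
qed

lemma cuts_before_inj: "u \<in> cut_edges \<Longrightarrow> u' \<in> cut_edges \<Longrightarrow> cuts_before u = cuts_before u' \<Longrightarrow> u = u'"
  using ord_total cut_edges_subset cuts_before_less[of u u u'] cuts_before_less[of u' u' u]
  by (metis less_irrefl subsetD)

lemma matched_input_cut_edge: "u \<in> cut_edges \<Longrightarrow> matched_input lower star u = u"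
  unfolding matched_input_def
proof (rule the_equality)
  assume u: "u \<in> cut_edges"
  then show "u \<in> input_edges star \<and> ins_before star u = outs_before lower u"
    using star_ins_before lower_outs_before cut_edges_subset_lower_edges
    by (auto simp: star_inputs star_edges_def)
  fix i assume "i \<in> input_edges star \<and> ins_before star i = outs_before lower u"
  then show "i = u"
    using u star_ins_before lower_outs_before cut_edges_subset_lower_edges cuts_before_inj
    by (auto simp: star_inputs star_edges_def)
qed

lemma lower_non_sinks:
  "{y \<in> verts lower. \<not> is_sink lower y} = (\<lambda>x. 2 * x) ` {x \<in> verts G. x \<noteq> v \<and> \<not> is_sink G x}"
proof (intro equalityI subsetI)
  fix y assume y: "y \<in> {y \<in> verts lower. \<not> is_sink lower y}"
  then have "y \<in> verts lower"
    by simp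
  then show "y \<in> (\<lambda>x. 2 * x) ` {x \<in> verts G. x \<noteq> v \<and> \<not> is_sink G x}"
  proof (cases rule: lower_vertsE)
    case (double x)
    then show ?thesis
      using y lower_degs_double by (auto simp: is_sink_def lower_verts_def)
  next
    case (odd e)
    then show ?thesis
      using y lower_degs_odd by (simp add: is_sink_def)
  qed
next
  fix y assume "y \<in> (\<lambda>x. 2 * x) ` {x \<in> verts G. x \<noteq> v \<and> \<not> is_sink G x}"
  then obtain x where x: "y = 2 * x" "x \<in> verts G" "x \<noteq> v" "\<not> is_sink G x"
    by auto
  then have "x \<in> lower_verts"
    using out_v_sink by (auto simp: lower_verts_def)
  then show "y \<in> {y \<in> verts lower. \<not> is_sink lower y}"
    using x lower_degs_double by (auto simp: lower_simps is_sink_def)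
qed

lemma star_non_sources:
  "{y \<in> verts star. \<not> is_source star y} = {2 * v} \<union> (\<lambda>t. 2 * t) ` {t \<in> verts G. is_sink G t}"
proof (intro equalityI subsetI)
  fix y assume y: "y \<in> {y \<in> verts star. \<not> is_source star y}"
  then have "y \<in> verts star"
    by simp
  then show "y \<in> {2 * v} \<union> (\<lambda>t. 2 * t) ` {t \<in> verts G. is_sink G t}"
    by (cases rule: star_vertsE) (use y star_degs_odd in \<open>auto simp: is_source_def\<close>)
next
  fix y assume "y \<in> {2 * v} \<union> (\<lambda>t. 2 * t) ` {t \<in> verts G. is_sink G t}"
  then show "y \<in> {y \<in> verts star. \<not> is_source star y}"
    using star_degs_v star_degs_sink v_not_source v_in_verts by (auto simp: is_source_def star_simps)
qed

lemma recomposed_verts: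
  "verts (pop_comp lower star) =
     Inl ` (\<lambda>x. 2 * x) ` {x \<in> verts G. x \<noteq> v \<and> \<not> is_sink G x} \<union>
     Inr ` ({2 * v} \<union> (\<lambda>t. 2 * t) ` {t \<in> verts G. is_sink G t})"
  by (simp add: pop_comp_simps lower_non_sinks star_non_sources)

lemma recomposed_edges: "edges (pop_comp lower star) = Inl ` lower_edges \<union> Inr ` out_v"
proof -
  have "star_edges - cut_edges = out_v"
    using cut_edges_not_out_v by (auto simp: star_edges_def)
  then show ?thesis
    by (simp add: pop_comp_simps star_inputs lower_simps star_simps)
qed

lemma recomposed_verts_bij:
  "bij_betw (case_sum (\<lambda>y. y div 2) (\<lambda>y. y div 2)) (verts (pop_comp lower star)) (verts G)"
proof (rule bij_betw_imageI)
  show "inj_on (case_sum (\<lambda>y. y div 2) (\<lambda>y. y div 2)) (verts (pop_comp lower star))"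
    unfolding recomposed_verts inj_on_def using v_not_sink by auto
  have "x \<in> case_sum (\<lambda>y. y div 2) (\<lambda>y. y div 2) ` verts (pop_comp lower star)" if "x \<in> verts G" for x
  proof -
    have "Inl (2 * x) \<in> verts (pop_comp lower star) \<or> Inr (2 * x) \<in> verts (pop_comp lower star)"
      using that unfolding recomposed_verts by blast
    then show ?thesis
      by (metis (no_types) image_eqI nonzero_mult_div_cancel_left old.sum.simps(5,6) zero_neq_numeral)
  qed
  then show "case_sum (\<lambda>y. y div 2) (\<lambda>y. y div 2) ` verts (pop_comp lower star) = verts G"
    unfolding recomposed_verts using v_in_verts by auto
qed

lemma recomposed_edges_bij: "bij_betw (case_sum id id) (edges (pop_comp lower star)) (edges G)"
proof (rule bij_betw_imageI)
  show "inj_on (case_sum id id) (edges (pop_comp lower star))"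
    unfolding recomposed_edges inj_on_def by (auto simp: lower_edges_def)
  have "case_sum id id ` (Inl ` lower_edges \<union> Inr ` out_v) = lower_edges \<union> out_v"
    by (simp add: image_Un image_image)
  then show "case_sum id id ` edges (pop_comp lower star) = edges G"
    unfolding recomposed_edges by (auto simp: lower_edges_def out_v_def)
qed

lemma recomposed_src_tgt:
  assumes "e \<in> edges (pop_comp lower star)"
  shows "src G (case_sum id id e) = case_sum (\<lambda>y. y div 2) (\<lambda>y. y div 2) (src (pop_comp lower star) e)"
    and "tgt G (case_sum id id e) = case_sum (\<lambda>y. y div 2) (\<lambda>y. y div 2) (tgt (pop_comp lower star) e)"
proof -
  from assms consider (lower) a where "e = Inl a" "a \<in> lower_edges"
    | (out_v) b where "e = Inr b" "b \<in> out_v"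
    unfolding recomposed_edges by blast
  then have "src G (case_sum id id e) = case_sum (\<lambda>y. y div 2) (\<lambda>y. y div 2) (src (pop_comp lower star) e) \<and>
             tgt G (case_sum id id e) = case_sum (\<lambda>y. y div 2) (\<lambda>y. y div 2) (tgt (pop_comp lower star) e)"
  proof cases
    case lower
    have "tgt G a \<noteq> v" if "a \<notin> cut_edges"
      using that lower(2) in_v_subset_cut_edges by (auto simp: in_v_def lower_edges_def)
    then show ?thesis
      using lower matched_input_cut_edge
      by (simp add: pop_comp_simps lower_outputs lower_simps star_simps)
  next
    case out_v
    then show ?thesis
      by (simp add: pop_comp_simps star_simps out_v_def)
  qed
  then show "src G (case_sum id id e) = case_sum (\<lambda>y. y div 2) (\<lambda>y. y div 2) (src (pop_comp lower star) e)"
    and "tgt G (case_sum id id e) = case_sum (\<lambda>y. y div 2) (\<lambda>y. y div 2) (tgt (pop_comp lower star) e)"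
    by simp_all
qed

lemma recomposed_ord:
  assumes "e \<in> edges (pop_comp lower star)" and "e' \<in> edges (pop_comp lower star)"
  shows "(e, e') \<in> ord (pop_comp lower star) \<longleftrightarrow> (case_sum id id e, case_sum id id e') \<in> ord G"
proof -
  have edges: "edges lower = lower_edges" "edges star - input_edges star = out_v"
    using cut_edges_not_out_v by (auto simp: lower_simps star_simps star_inputs star_edges_def)
  have out_v_star: "b \<in> star_edges" and ins_before_out_v: "ins_before star b = cuts_before b"
    if "b \<in> out_v" for b
    using that star_ins_before by (simp_all add: star_edges_def)
  show ?thesis
    using assms cut_edges_not_out_v
    by (auto simp: recomposed_edges pop_comp_ord edges lower_simps star_simps star_inputs
                   lower_outs_before out_v_star ins_before_out_v ord_lower_out_v_iff)
qed

lemma recomposed_iso: "pop_iso (pop_comp lower star) G"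
  unfolding pop_iso_def
  using recomposed_verts_bij recomposed_edges_bij recomposed_src_tgt recomposed_ord by blast

lemma composable_lower_star: "composable lower star"
  using lower_pop_graph star_pop_graph by (simp add: composable_def lower_outputs star_inputs)

end

section \<open>Elementary decomposition\<close>

definition composite_chain :: "(nat, nat) pgraph list \<Rightarrow> (nat, nat) pgraph list \<Rightarrow> bool" where
  "composite_chain Gs Hs \<longleftrightarrow> Gs \<noteq> [] \<and> length Hs = length Gs \<and> Hs ! 0 = Gs ! 0 \<and>
     (\<forall>k. 0 < k \<and> k < length Gs \<longrightarrow>
        composable (Hs ! (k - 1)) (Gs ! k) \<and> pop_iso (pop_comp (Hs ! (k - 1)) (Gs ! k)) (Hs ! k))"

lemma is_composite_of_iff: "is_composite_of Gs G \<longleftrightarrow> (\<exists>Hs. composite_chain Gs Hs \<and> pop_iso (last Hs) G)"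
  by (auto simp: is_composite_of_def composite_chain_def)

lemma composite_chain_single: "composite_chain [G] [G]"
  by (simp add: composite_chain_def)

lemma composite_chain_snoc:
  assumes chain: "composite_chain Gs Hs"
    and "composable (last Hs) E" and "pop_iso (pop_comp (last Hs) E) H"
  shows "composite_chain (Gs @ [E]) (Hs @ [H])"
proof -
  have len: "length Hs = length Gs" and "Gs \<noteq> []"
    using chain by (simp_all add: composite_chain_def)
  then have "Hs \<noteq> []"
    by auto
  then have last: "Hs ! (length Gs - 1) = last Hs"
    using len by (simp add: last_conv_nth)
  have "composable ((Hs @ [H]) ! (k - 1)) ((Gs @ [E]) ! k) \<and>
        pop_iso (pop_comp ((Hs @ [H]) ! (k - 1)) ((Gs @ [E]) ! k)) ((Hs @ [H]) ! k)"
    if "0 < k" "k < length (Gs @ [E])" for k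
  proof (cases "k < length Gs")
    case True
    then have "k - 1 < length Gs"
      by simp
    then show ?thesis
      using chain that True len by (simp add: composite_chain_def nth_append)
  next
    case False
    then have "k = length Gs"
      using that by simp
    then show ?thesis
      using assms len last \<open>Gs \<noteq> []\<close> by (simp add: nth_append)
  qed
  then show ?thesis
    using chain \<open>Hs \<noteq> []\<close> by (auto simp: composite_chain_def nth_append)
qed

lemma exists_top_internal_vertex:
  assumes pop: "pop_graph G" and "internal G w"
  shows "\<exists>v. internal G v \<and> (\<forall>e \<in> edges G. src G e = v \<longrightarrow> is_sink G (tgt G e))"
proof -
  have prog: "progressive G"
    using pop by (simp add: pop_graph_def)
  define I where "I = {x. internal G x}"
  define S where "S = {(x, y). x \<in> I \<and> y \<in> I \<and> (x, y) \<in> {(src G e, tgt G e) | e. e \<in> edges G}}"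
  have "finite S"
    using prog finite_subset[of S "I \<times> I"] by (auto simp: S_def I_def internal_def progressive_def)
  moreover have "acyclic S"
    using prog by (auto simp: S_def progressive_def intro: acyclic_subset)
  ultimately have "wf (S\<inverse>)"
    by (rule finite_acyclic_wf_converse)
  then obtain v where v: "v \<in> I" and maximal: "\<And>y. (v, y) \<in> S \<Longrightarrow> y \<notin> I"
    using \<open>internal G w\<close> unfolding wf_eq_minimal I_def by (metis converse_iff mem_Collect_eq)
  have "is_sink G (tgt G e)" if e: "e \<in> edges G" "src G e = v" for e
  proof -
    have t: "tgt G e \<in> verts G"
      using prog e by (simp add: progressive_def)
    then have "deg G (tgt G e) = 1"
      using maximal[of "tgt G e"] v e by (auto simp: S_def I_def internal_def)
    moreover have "indeg G (tgt G e) \<noteq> 0"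
      using prog e unfolding indeg_def progressive_def by auto
    ultimately show ?thesis
      using t by (simp add: deg_def is_sink_def)
  qed
  then show ?thesis
    using v by (auto simp: I_def)
qed

lemma elementary_composite_chain:
  fixes G :: "(nat, nat) pgraph"
  assumes "pop_graph G"
  shows "\<exists>Gs Hs. (\<forall>H \<in> set Gs. elementary_pop H) \<and> composite_chain Gs Hs \<and> last Hs = G"
  using assms
proof (induction "card {x. internal G x}" arbitrary: G)
  case 0
  have "finite {x. internal G x}"
    using 0 by (simp add: pop_graph_def progressive_def internal_def)
  then have "{x. internal G x} = {}"
    using 0 by simp
  then have "elementary_pop G"
    using 0 by (auto simp: elementary_pop_def elementary_def)
  then show ?case
    by (intro exI[of _ "[G]"]) (simp add: composite_chain_single)
next
  case (Suc n)
  then obtain w where "internal G w"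
    by (metis Collect_empty_eq card.empty nat.distinct(1))
  then obtain v where "internal G v" "\<forall>e \<in> edges G. src G e = v \<longrightarrow> is_sink G (tgt G e)"
    using exists_top_internal_vertex[OF Suc.prems] by blast
  then interpret top_vertex G v
    using Suc.prems by unfold_locales auto
  have "n = card {x. internal lower x}"
    using card_internal_lower Suc.hyps(2) by simp
  then obtain Gs Hs where "\<forall>H \<in> set Gs. elementary_pop H" "composite_chain Gs Hs" "last Hs = lower"
    using Suc.hyps(1) lower_pop_graph by blast
  moreover have "composite_chain (Gs @ [star]) (Hs @ [G])"
    using calculation composable_lower_star recomposed_iso by (simp add: composite_chain_snoc)
  ultimately show ?case
    using star_elementary by (intro exI[of _ "Gs @ [star]"] exI[of _ "Hs @ [G]"]) simp
qed

theorem proposition2p11: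
  fixes G :: "('v, 'e) pgraph"
  assumes "pop_graph G"
  shows "\<exists>Gs :: (nat, nat) pgraph list.
           (\<forall>H \<in> set Gs. elementary_pop H) \<and> is_composite_of Gs G"
proof -
  obtain H :: "(nat, nat) pgraph" where "pop_graph H" and iso: "pop_iso H G"
    using pop_graph_nat_copy[OF assms] .
  then obtain Gs Hs where "\<forall>H \<in> set Gs. elementary_pop H" "composite_chain Gs Hs" "last Hs = H"
    using elementary_composite_chain by blast
  then show ?thesis
    using iso is_composite_of_iff by metis
qed

end
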